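(* Fix $\varepsilon\in\{1,-1\}$ and $m\in\mathbb{R}$. The momentum map $\Phi : Y\to\mathfrak{sl}(2,\mathbb{C})$, $\Phi(A;h,h_1,h_2)=A\,U(h,h_1,h_2)\,A^{-1}$, is constant along every integral curve of the Euler--Lagrange system $(\mathcal{J},\omega)$.
   Context: For $(h,h_1,h_2)\in\mathbb{R}^3$ put \[ U(h,h_1,h_2)=\begin{pmatrix} i h_1 & 2i\varepsilon\left(h-\varepsilon\left(\frac{m}{3}+i\right)\right)\\[2pt] 2\left(h+\frac{2\varepsilon m}{3}\right)-i\varepsilon\left(h_2-4h^2+\frac{2\varepsilon m h}{3}+\frac{2m^2}{9}-2\right) & -ih_1\end{pmatrix}. \] The momentum space is $Y=\mathrm{SL}(2,\mathbb{C})\times\mathbb{R}^3$ with coordinates $(A;h,h_1,h_2)$. Write the Maurer--Cartan form of $\mathrm{SL}(2,\mathbb{C})$ (pulled back to $Y$) as $A^{-1}dA=\alpha+i\beta$ with $\alpha=\begin{pmatrix}\alpha^1_1&\alpha^1_2\\ \alpha^2_1&-\alpha^1_1\end{pmatrix}$, $\beta=\begin{pmatrix}\beta^1_1&\beta^1_2\\ \beta^2_1&-\beta^1_1\end{pmatrix}$ real-valued. Let $\omega=\beta^2_1$. The Euler--Lagrange system $(\mathcal{J},\omega)$ is the Pfaffian system on $Y$ generated by the 1-forms $\beta^1_1$, $\beta^1_2$, $\alpha^1_1$, $\alpha^1_2-\varepsilon\omega$, $\alpha^2_1-(2\varepsilon h+\frac{m}{3})\omega$, $dh-h_1\omega$,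 $dh_1-h_2\omega$, $dh_2-12hh_1\omega$, with independence condition $\omega\neq0$. An integral curve is a smooth curve $y:I\to Y$ on an interval $I$ on which all these generators pull back to zero and $y^\ast\omega$ vanishes nowhere. *)

theory Defs
  imports "HOL-Analysis.Analysis"
begin

definition U_mat :: "real \<Rightarrow> real \<Rightarrow> real \<Rightarrow> real \<Rightarrow> real \<Rightarrow> complex^2^2" where
  "U_mat eps m h h1 h2 = (\<chi> i j.
     if i = 1 \<and> j = 1 then \<i> * complex_of_real h1
     else if i = 1 \<and> j = 2 then
       2 * \<i> * complex_of_real eps *
         (complex_of_real h - complex_of_real eps * (complex_of_real (m / 3) + \<i>))
     else if i = 2 \<and> j = 1 then
       2 * complex_of_real (h + 2 * eps * m / 3)
       - \<i> * complex_of_real eps *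
         complex_of_real (h2 - 4 * h\<^sup>2 + 2 * eps * m * h / 3 + 2 * m\<^sup>2 / 9 - 2)
     else - \<i> * complex_of_real h1)"

definition momentum_map :: "real \<Rightarrow> real \<Rightarrow> complex^2^2 \<Rightarrow> real \<Rightarrow> real \<Rightarrow> real \<Rightarrow> complex^2^2" where
  "momentum_map eps m A h h1 h2 = A ** U_mat eps m h h1 h2 ** matrix_inv A"

text \<open>The pull-back of the Maurer--Cartan form is (A t)^{-1} A'(t) dt =: (alpha + i beta) dt;
  alpha_jk = Re, beta_jk = Im of its entries; omega = beta^2_1.\<close>

definition MC_pullback :: "complex^2^2 \<Rightarrow> complex^2^2 \<Rightarrow> complex^2^2" where
  "MC_pullback A A' = matrix_inv A ** A'"

definition EL_integral_curve ::
  "real \<Rightarrow> real \<Rightarrow> real set \<Rightarrow> (real \<Rightarrow> complex^2^2) \<Rightarrow> (real \<Rightarrow> real) \<Rightarrow> (real \<Rightarrow> real)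
     \<Rightarrow> (real \<Rightarrow> real) \<Rightarrow> bool" where
  "EL_integral_curve eps m I A h h1 h2 \<longleftrightarrow>
     is_interval I \<and>
     (\<forall>t\<in>I. det (A t) = 1) \<and>
     (\<exists>A' dh dh1 dh2. \<forall>t\<in>I.
        (A has_vector_derivative A' t) (at t within I) \<and>
        (h has_real_derivative dh t) (at t within I) \<and>
        (h1 has_real_derivative dh1 t) (at t within I) \<and>
        (h2 has_real_derivative dh2 t) (at t within I) \<and>
        (let M = MC_pullback (A t) (A' t); \<omega> = Im (M $ 2 $ 1) in
           Im (M $ 1 $ 1) = 0 \<and>
           Im (M $ 1 $ 2) = 0 \<and>
           Re (M $ 1 $ 1) = 0 \<and>
           Re (M $ 1 $ 2) - eps * \<omega> = 0 \<and>
           Re (M $ 2 $ 1) - (2 * eps * h t + m / 3) * \<omega> = 0 \<and>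
           dh t - h1 t * \<omega> = 0 \<and>
           dh1 t - h2 t * \<omega> = 0 \<and>
           dh2 t - 12 * h t * h1 t * \<omega> = 0 \<and>
           \<omega> \<noteq> 0))"

end

theory Submission
  imports Defs
begin

text \<open>Along an integral curve the Maurer--Cartan form is \<open>A\<^sup>-\<^sup>1A' = M\<close>, where the Pfaffian
  equations fix \<open>M\<close> up to its trace, and \<open>det A = 1\<close> forces \<open>trace M = 0\<close>. The remaining
  equations for \<open>h, h\<^sub>1, h\<^sub>2\<close> say exactly that \<open>U' = UM - MU\<close>, a Lax equation. Hence
  \<open>(AUA\<^sup>-\<^sup>1)' = A(MU + U' - UM)A\<^sup>-\<^sup>1 = 0\<close>, and a function with zero derivative on an interval
  is constant. Inverses of matrices in \<open>SL(2)\<close> are handled through the adjugate, which is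
  linear and equals \<open>-M\<close> on traceless \<open>M\<close>.\<close>

lemma bounded_bilinear_matrix_matrix_mult:
  "bounded_bilinear ((**) :: 'a::{real_normed_algebra_1,euclidean_space}^'n^'m \<Rightarrow> 'a^'p^'n \<Rightarrow> 'a^'p^'m)"
  unfolding bilinear_conv_bounded_bilinear[symmetric] bilinear_def linear_iff
  by (auto simp: matrix_add_ldistrib matrix_scalar_ac scalar_matrix_assoc vec_eq_iff
      matrix_matrix_mult_def sum.distrib distrib_left distrib_right scaleR_sum_right)

lemma has_vector_derivative_componentwise_iff:
  fixes f :: "real \<Rightarrow> 'a::real_normed_vector^'n"
  shows "(f has_vector_derivative f') F \<longleftrightarrow> (\<forall>i. ((\<lambda>t. f t $ i) has_vector_derivative f' $ i) F)"
  using bounded_linear.has_vector_derivative[OF bounded_linear_vec_nth]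
  unfolding has_vector_derivative_def has_derivative_def
  by (auto intro!: vec_tendstoI bounded_linear_scaleR_left)

lemma matrix_diff_ldistrib: "(A::'a::ring_1^'n^'m) ** (B - C) = A ** B - A ** C"
  by (simp add: vec_eq_iff matrix_matrix_mult_def sum_subtractf right_diff_distrib)

lemma matrix_mul_uminus_left: "(- (A::'a::ring_1^'n^'m)) ** B = - (A ** B)"
  by (simp add: vec_eq_iff matrix_matrix_mult_def sum_negf)

lemma matrix_mul_uminus_right: "(A::'a::ring_1^'n^'m) ** (- B) = - (A ** B)"
  by (simp add: vec_eq_iff matrix_matrix_mult_def sum_negf)

lemma matrix2_eq_iff:
  "(X::'a^2^2) = Y \<longleftrightarrow> X$1$1 = Y$1$1 \<and> X$1$2 = Y$1$2 \<and> X$2$1 = Y$2$1 \<and> X$2$2 = Y$2$2"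
  by (auto simp: vec_eq_iff forall_2)

lemma matrix2_mult_nth: "((A::'a::semiring_1^2^2) ** B) $ i $ j = A$i$1 * B$1$j + A$i$2 * B$2$j"
  by (simp add: matrix_matrix_mult_def UNIV_2)

lemma trace2: "trace (A::'a::semiring_1^2^2) = A$1$1 + A$2$2"
  by (simp add: trace_def UNIV_2)

text \<open>By Cayley--Hamilton, \<open>tr(A)I - A\<close> is the adjugate of a \<open>2\<times>2\<close> matrix.\<close>

definition adjugate2 :: "'a::comm_ring_1^2^2 \<Rightarrow> 'a^2^2" where
  "adjugate2 A = mat (trace A) - A"

lemma adjugate2_nth [simp]:
  "adjugate2 A $1$1 = A$2$2" "adjugate2 A $1$2 = - A$1$2"
  "adjugate2 A $2$1 = - A$2$1" "adjugate2 A $2$2 = A$1$1"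
  by (simp_all add: adjugate2_def trace2 mat_def)

lemma matrix_mul_adjugate2: "A ** adjugate2 A = mat (det A)"
  by (simp add: matrix2_eq_iff matrix2_mult_nth det_2 mat_def algebra_simps)

lemma adjugate2_matrix_mul: "adjugate2 A ** A = mat (det A)"
  by (simp add: matrix2_eq_iff matrix2_mult_nth det_2 mat_def algebra_simps)

lemma matrix_inv_eq_adjugate2:
  assumes "det A = 1"
  shows "matrix_inv A = adjugate2 A"
proof -
  have inv: "A ** adjugate2 A = mat 1" "adjugate2 A ** A = mat 1"
    using assms by (simp_all add: matrix_mul_adjugate2 adjugate2_matrix_mul)
  then have "\<exists>X. A ** X = mat 1 \<and> X ** A = mat 1" by blast
  then have "A ** matrix_inv A = mat 1"
    unfolding matrix_inv_def by (metis (mono_tags, lifting) someI_ex)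
  then have "adjugate2 A ** (A ** matrix_inv A) = adjugate2 A" by simp
  then show ?thesis by (simp add: matrix_mul_assoc inv)
qed

lemma adjugate2_mult: "adjugate2 (A ** B) = adjugate2 B ** adjugate2 A"
  by (simp add: matrix2_eq_iff matrix2_mult_nth algebra_simps)

lemma adjugate2_traceless: "trace M = 0 \<Longrightarrow> adjugate2 M = - M"
  by (simp add: adjugate2_def)

lemma has_vector_derivative_adjugate2:
  fixes A :: "real \<Rightarrow> 'a::{comm_ring_1,real_normed_vector}^2^2"
  assumes "(A has_vector_derivative A') F"
  shows "((\<lambda>t. adjugate2 (A t)) has_vector_derivative adjugate2 A') F"
  using assms unfolding has_vector_derivative_componentwise_iff forall_2
  by (simp add: has_vector_derivative_minus)

lemma has_vector_derivative_det2:
  fixes A :: "real \<Rightarrow> 'a::{real_normed_algebra,comm_ring_1}^2^2"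
  assumes "(A has_vector_derivative A') (at x within S)"
  shows "((\<lambda>t. det (A t)) has_vector_derivative trace (adjugate2 (A x) ** A')) (at x within S)"
proof -
  have "((\<lambda>t. A t $ i $ j) has_vector_derivative A' $ i $ j) (at x within S)" for i j
    using assms unfolding has_vector_derivative_componentwise_iff by blast
  then show ?thesis
    unfolding det_2 trace2 matrix2_mult_nth adjugate2_nth
    by (auto intro!: derivative_eq_intros simp: algebra_simps)
qed

lemma Maurer_Cartan_traceless_if_det_eq_1:
  fixes A :: "real \<Rightarrow> 'a::{real_normed_algebra,comm_ring_1}^2^2"
  assumes "\<And>t. t \<in> S \<Longrightarrow> det (A t) = 1" "x \<in> S" "at x within S \<noteq> bot"
    and "(A has_vector_derivative A') (at x within S)"
  shows "trace (adjugate2 (A x) ** A') = 0"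
proof -
  have "((\<lambda>t. 1) has_vector_derivative trace (adjugate2 (A x) ** A')) (at x within S)"
    using has_vector_derivative_transform[OF assms(2) _ has_vector_derivative_det2[OF assms(4)]]
      assms(1)
    by simp
  then show ?thesis
    using vector_derivative_unique_within[OF assms(3) _ has_vector_derivative_const] by blast
qed

lemma conjugation_has_vector_derivative_zero:
  fixes A U :: "real \<Rightarrow> 'a::{real_normed_algebra_1,euclidean_space,comm_ring_1}^2^2"
  assumes "(A has_vector_derivative A x ** M) (at x within S)"
    and "(U has_vector_derivative U x ** M - M ** U x) (at x within S)"
    and "trace M = 0"
  shows "((\<lambda>t. A t ** U t ** adjugate2 (A t)) has_vector_derivative 0) (at x within S)"
proof -
  note mult_rule = bounded_bilinear.has_vector_derivative[OF bounded_bilinear_matrix_matrix_mult]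
  have "adjugate2 (A x ** M) = - M ** adjugate2 (A x)"
    by (simp add: adjugate2_mult adjugate2_traceless[OF assms(3)])
  then show ?thesis
    using mult_rule[OF mult_rule[OF assms(1,2)] has_vector_derivative_adjugate2[OF assms(1)]]
    by (simp add: matrix_mul_assoc matrix_add_ldistrib matrix_diff_ldistrib
        matrix_mul_uminus_left matrix_mul_uminus_right)
qed

lemma U_mat_nth:
  "U_mat eps m h h1 h2 $1$1 = \<i> * of_real h1"
  "U_mat eps m h h1 h2 $1$2 = 2 * \<i> * of_real eps * (of_real h - of_real eps * (of_real (m / 3) + \<i>))"
  "U_mat eps m h h1 h2 $2$1 = 2 * of_real (h + 2 * eps * m / 3)
     - \<i> * of_real eps * of_real (h2 - 4 * h\<^sup>2 + 2 * eps * m * h / 3 + 2 * m\<^sup>2 / 9 - 2)"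
  "U_mat eps m h h1 h2 $2$2 = - \<i> * of_real h1"
  by (simp_all add: U_mat_def)

text \<open>The value of \<open>A\<^sup>-\<^sup>1A'\<close> imposed by the Euler--Lagrange system when \<open>\<omega> = w dt\<close>.\<close>

definition EL_connection :: "real \<Rightarrow> real \<Rightarrow> real \<Rightarrow> real \<Rightarrow> complex^2^2" where
  "EL_connection eps m h w = (\<chi> i j.
     if i = 1 \<and> j = 2 then of_real (eps * w)
     else if i = 2 \<and> j = 1 then Complex ((2 * eps * h + m / 3) * w) w
     else 0)"

lemma EL_connection_nth [simp]:
  "EL_connection eps m h w $1$1 = 0" "EL_connection eps m h w $1$2 = of_real (eps * w)"
  "EL_connection eps m h w $2$1 = Complex ((2 * eps * h + m / 3) * w) w"
  "EL_connection eps m h w $2$2 = 0"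
  by (simp_all add: EL_connection_def)

lemma U_mat_has_vector_derivative:
  fixes h h1 h2 :: "real \<Rightarrow> real" and eps m w x :: real
  assumes "eps = 1 \<or> eps = -1"
    and "(h has_real_derivative h1 x * w) (at x within S)"
    and "(h1 has_real_derivative h2 x * w) (at x within S)"
    and "(h2 has_real_derivative 12 * h x * h1 x * w) (at x within S)"
  defines "U \<equiv> U_mat eps m (h x) (h1 x) (h2 x)" and "M \<equiv> EL_connection eps m (h x) w"
  shows "((\<lambda>t. U_mat eps m (h t) (h1 t) (h2 t)) has_vector_derivative U ** M - M ** U) (at x within S)"
  unfolding has_vector_derivative_componentwise_iff forall_2 U_mat_nth U_def M_def
  using assms(1)
  by (auto intro!: derivative_eq_intros assms(2-4)
      simp: matrix2_mult_nth U_mat_nth complex_eq_iff field_simps power2_eq_square)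

lemma EL_integral_curve_lax_pair:
  assumes eps: "eps = 1 \<or> eps = -1"
    and curve: "EL_integral_curve eps m I A h h1 h2"
    and x: "x \<in> I" and nontrivial: "at x within I \<noteq> bot"
  obtains M where "trace M = 0"
    and "(A has_vector_derivative A x ** M) (at x within I)"
    and "((\<lambda>t. U_mat eps m (h t) (h1 t) (h2 t)) has_vector_derivative
          U_mat eps m (h x) (h1 x) (h2 x) ** M - M ** U_mat eps m (h x) (h1 x) (h2 x)) (at x within I)"
proof -
  have det: "\<And>t. t \<in> I \<Longrightarrow> det (A t) = 1"
    using curve by (simp add: EL_integral_curve_def)
  obtain A' dh dh1 dh2 where
      dA: "(A has_vector_derivative A') (at x within I)"
    and dh: "(h has_real_derivative dh) (at x within I)"
    and dh1: "(h1 has_real_derivative dh1) (at x within I)"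
    and dh2: "(h2 has_real_derivative dh2) (at x within I)"
    and pfaff: "let M = MC_pullback (A x) A'; \<omega> = Im (M $ 2 $ 1) in
        Im (M $ 1 $ 1) = 0 \<and> Im (M $ 1 $ 2) = 0 \<and> Re (M $ 1 $ 1) = 0 \<and>
        Re (M $ 1 $ 2) - eps * \<omega> = 0 \<and> Re (M $ 2 $ 1) - (2 * eps * h x + m / 3) * \<omega> = 0 \<and>
        dh - h1 x * \<omega> = 0 \<and> dh1 - h2 x * \<omega> = 0 \<and> dh2 - 12 * h x * h1 x * \<omega> = 0 \<and> \<omega> \<noteq> 0"
    using curve x unfolding EL_integral_curve_def by blast
  define M where "M = MC_pullback (A x) A'"
  define w where "w = Im (M $ 2 $ 1)"
  have M_adj: "M = adjugate2 (A x) ** A'"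
    by (simp add: M_def MC_pullback_def matrix_inv_eq_adjugate2 det x)
  \<comment> \<open>not among the Pfaffian equations: it comes from \<open>det A = 1\<close>\<close>
  have "trace M = 0"
    unfolding M_adj by (rule Maurer_Cartan_traceless_if_det_eq_1[OF det x nontrivial dA])
  with pfaff have M_eq: "M = EL_connection eps m (h x) w"
    by (simp add: Let_def M_def[symmetric] w_def matrix2_eq_iff complex_eq_iff trace2)
  have "A' = A x ** M"
    by (simp add: M_adj matrix_mul_assoc matrix_mul_adjugate2 det x)
  with dA have dA_M: "(A has_vector_derivative A x ** M) (at x within I)" by simp
  have "dh = h1 x * w" "dh1 = h2 x * w" "dh2 = 12 * h x * h1 x * w"
    using pfaff by (simp_all add: Let_def M_def[symmetric] w_def)
  with dh dh1 dh2 M_eq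
  have "((\<lambda>t. U_mat eps m (h t) (h1 t) (h2 t)) has_vector_derivative
          U_mat eps m (h x) (h1 x) (h2 x) ** M - M ** U_mat eps m (h x) (h1 x) (h2 x)) (at x within I)"
    using U_mat_has_vector_derivative[OF eps] by simp
  with \<open>trace M = 0\<close> dA_M show ?thesis by (rule that)
qed

theorem corollary3p4:
  fixes eps m :: real and I :: "real set" and A :: "real \<Rightarrow> complex^2^2"
    and h h1 h2 :: "real \<Rightarrow> real"
  assumes "eps = 1 \<or> eps = -1"
    and "EL_integral_curve eps m I A h h1 h2"
  shows "\<forall>s\<in>I. \<forall>t\<in>I. momentum_map eps m (A s) (h s) (h1 s) (h2 s)
                      = momentum_map eps m (A t) (h t) (h1 t) (h2 t)"
proof (cases "\<exists>z. I = {z}")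
  case False
  have interval: "is_interval I" and det: "\<And>t. t \<in> I \<Longrightarrow> det (A t) = 1"
    using assms(2) unfolding EL_integral_curve_def by blast+
  define \<Phi> where "\<Phi> = (\<lambda>t. A t ** U_mat eps m (h t) (h1 t) (h2 t) ** adjugate2 (A t))"
  have momentum: "momentum_map eps m (A t) (h t) (h1 t) (h2 t) = \<Phi> t" if "t \<in> I" for t
    by (simp add: momentum_map_def \<Phi>_def matrix_inv_eq_adjugate2 det that)
  have deriv: "(\<Phi> has_derivative (\<lambda>_. 0)) (at x within I)" if x: "x \<in> I" for x
  proof -
    have nontrivial: "at x within I \<noteq> bot"
      using connected_imp_perfect[OF is_interval_connected[OF interval] x] False
      by (auto simp: trivial_limit_within)
    obtain M where "trace M = 0" "(A has_vector_derivative A x ** M) (at x within I)"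
      "((\<lambda>t. U_mat eps m (h t) (h1 t) (h2 t)) has_vector_derivative
          U_mat eps m (h x) (h1 x) (h2 x) ** M - M ** U_mat eps m (h x) (h1 x) (h2 x)) (at x within I)"
      by (rule EL_integral_curve_lax_pair[OF assms x nontrivial])
    from conjugation_has_vector_derivative_zero[OF this(2,3,1)] show ?thesis
      by (simp add: \<Phi>_def has_vector_derivative_def)
  qed
  show ?thesis
  proof (intro ballI)
    fix s t assume "s \<in> I" "t \<in> I"
    then show "momentum_map eps m (A s) (h s) (h1 s) (h2 s)
             = momentum_map eps m (A t) (h t) (h1 t) (h2 t)"
      using has_derivative_zero_unique[OF is_interval_convex[OF interval] deriv] momentum by metis
  qed
qed auto

end
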